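(* Let $X$ be a random measurable set in $\mathbb{R}^d$. Then for all $W\in\mathcal{W}$, $u\in S^{d-1}$ and $\varepsilon\ne0$, $\sigma_X(\varepsilon u;W)\le\mathbf{E}\,V_u(X;W)$, and $\mathbf{E}\,V_u(X;W)=\lim_{\varepsilon\to0}\sigma_X(\varepsilon u;W)$.
   Context: A random measurable set is a random variable in the space of Lebesgue classes of measurable subsets of $\mathbb{R}^d$ with the Borel $\sigma$-algebra of local convergence in measure. $\mathcal{W}$: bounded open $W$ with $\mathcal{L}^d(\partial W)=0$. $\delta_{y;W}(A)=\mathcal{L}^d(A\cap(y+A)\cap W)$; $W\ominus B=\{x:x+B\subset W\}$. For $u\ne0$, $\sigma_{u;W}(A)=\frac1{\|u\|}(\delta_{0;W\ominus[-u,0]}(A)-\delta_{u;W\ominus[-u,0]}(A)+\delta_{0;W\ominus[0,u]}(A)-\delta_{-u;W\ominus[0,u]}(A))$ and $\sigma_X(u;W)=\mathbf{E}\,\sigma_{u;W}(X)$. $V_u(A;U)=\sup\{\int_U\mathbb{1}_A\langle\nabla\varphi,u\rangle dx:\varphi\in C^1_c(U,\mathbb{R}),|\varphi|\le1\}$. *)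

theory Defs
  imports "HOL-Probability.Probability"
begin

definition admissible_window :: "'a::euclidean_space set \<Rightarrow> bool" where
  "admissible_window W \<longleftrightarrow> bounded W \<and> open W \<and> emeasure lebesgue (frontier W) = 0"

definition random_measurable_set :: "'b measure \<Rightarrow> ('b \<Rightarrow> 'a::euclidean_space set) \<Rightarrow> bool" where
  "random_measurable_set M X \<longleftrightarrow> prob_space M \<and>
     {p \<in> space M \<times> UNIV. snd p \<in> X (fst p)} \<in> sets (M \<Otimes>\<^sub>M lborel)"

definition erosion :: "'a::euclidean_space set \<Rightarrow> 'a set \<Rightarrow> 'a set" where
  "erosion W B = {x. (\<lambda>b. x + b) ` B \<subseteq> W}"

definition covario :: "'a::euclidean_space \<Rightarrow> 'a set \<Rightarrow> 'a set \<Rightarrow> real" where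
  "covario y W A = measure lebesgue (A \<inter> ((\<lambda>a. y + a) ` A) \<inter> W)"

definition sigma_fun :: "'a::euclidean_space \<Rightarrow> 'a set \<Rightarrow> 'a set \<Rightarrow> real" where
  "sigma_fun u W A = (1 / norm u) *
     (covario 0 (erosion W (closed_segment (- u) 0)) A
      - covario u (erosion W (closed_segment (- u) 0)) A
      + covario 0 (erosion W (closed_segment 0 u)) A
      - covario (- u) (erosion W (closed_segment 0 u)) A)"

definition sigma_X :: "'b measure \<Rightarrow> ('b \<Rightarrow> 'a::euclidean_space set) \<Rightarrow> 'a \<Rightarrow> 'a set \<Rightarrow> real" where
  "sigma_X M X u W = (\<integral>\<omega>. sigma_fun u W (X \<omega>) \<partial>M)"

text \<open>Test functions C^1_c(U,R) with |phi| \<le> 1 (extended by zero outside U),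
  together with their (continuous) Frechet derivative phi'.\<close>
definition C1c_test :: "'a::euclidean_space set \<Rightarrow> ('a \<Rightarrow> real) \<Rightarrow> ('a \<Rightarrow> 'a \<Rightarrow> real) \<Rightarrow> bool" where
  "C1c_test U \<phi> \<phi>' \<longleftrightarrow>
     (\<forall>x. (\<phi> has_derivative \<phi>' x) (at x)) \<and>
     (\<forall>v. continuous_on UNIV (\<lambda>x. \<phi>' x v)) \<and>
     compact (closure {x. \<phi> x \<noteq> 0}) \<and> closure {x. \<phi> x \<noteq> 0} \<subseteq> U \<and>
     (\<forall>x. \<bar>\<phi> x\<bar> \<le> 1)"

text \<open>Directional variation V_u(A;U); note phi' x u = <grad phi x, u>.\<close>
definition dir_variation :: "'a::euclidean_space \<Rightarrow> 'a set \<Rightarrow> 'a set \<Rightarrow> ereal" where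
  "dir_variation u A U = (SUP p \<in> {(\<phi>, \<phi>'). C1c_test U \<phi> \<phi>'}.
      ereal (\<integral>x. indicator (A \<inter> U) x * snd p x u \<partial>lebesgue))"

text \<open>E V_u(X;W) (V_u is nonnegative, so the nonnegative integral is used).\<close>
definition exp_dir_variation :: "'b measure \<Rightarrow> ('b \<Rightarrow> 'a::euclidean_space set) \<Rightarrow> 'a \<Rightarrow> 'a set \<Rightarrow> ereal" where
  "exp_dir_variation M X u W = enn2ereal (\<integral>\<^sup>+\<omega>. e2ennreal (dir_variation u (X \<omega>) W) \<partial>M)"

end

theory Submission
  imports Defs
begin

text \<open>
  For a Borel set \<open>A\<close>, \<open>|v| \<sigma>\<^sub>v\<^sub>;\<^sub>W(A)\<close> is the measure of the symmetric difference of \<open>A\<close> and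
  \<open>A + v\<close> inside the eroded window \<open>W \<ominus> [-v, 0]\<close>, and \<open>\<integral> 1\<^sub>A (\<phi>(\<cdot> + v) - \<phi>) = \<integral> (1\<^sub>A\<^sub>+\<^sub>v - 1\<^sub>A) \<phi>\<close>.
  For a test function \<open>\<phi>\<close> supported in \<open>W\<close> and small \<open>t > 0\<close> this bounds the difference quotient
  \<open>t\<^sup>-\<^sup>1 \<integral> 1\<^sub>A (\<phi>(\<cdot> + t u) - \<phi>)\<close> by \<open>\<sigma>\<^sub>t\<^sub>u\<^sub>;\<^sub>W(A)\<close>, and letting \<open>t \<rightarrow> 0\<close> gives
  \<open>V\<^sub>u(A;W) \<le> liminf \<sigma>\<^sub>t\<^sub>u\<^sub>;\<^sub>W(A)\<close>. Conversely, the sign of \<open>1\<^sub>A - 1\<^sub>A\<^sub>+\<^sub>v\<close> on the eroded window is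
  approximated in \<open>L\<^sup>1\<close> by a \<open>C\<^sup>1\<close> test function \<open>\<psi>\<close>, and the mean value theorem writes
  \<open>\<integral> 1\<^sub>A (\<psi> - \<psi>(\<cdot> + t u))\<close> as \<open>-t \<integral> 1\<^sub>A \<partial>\<^sub>u\<psi>(\<cdot> + \<xi> u)\<close> with \<open>\<psi>(\<cdot> + \<xi> u)\<close> supported in \<open>W\<close>; hence
  \<open>\<sigma>\<^sub>t\<^sub>u\<^sub>;\<^sub>W(A) \<le> V\<^sub>u(A;W)\<close>. So \<open>\<sigma>\<^sub>\<epsilon>\<^sub>u\<^sub>;\<^sub>W(A) \<rightarrow> V\<^sub>u(A;W)\<close> (\<open>\<sigma>\<close> is even in \<open>\<epsilon>\<close>), and for the random
  set \<open>X\<close> the expectations converge by Fatou's lemma combined with the upper bound.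
\<close>

subsection \<open>Segment erosions and \<open>\<sigma>\<close> as a measure\<close>

definition seg_erosion :: "'a::euclidean_space set \<Rightarrow> 'a \<Rightarrow> 'a set" where
  "seg_erosion W v = erosion W (closed_segment (- v) 0)"

lemma translation_closed_segment:
  fixes x a b :: "'a::euclidean_space"
  shows "(+) x ` closed_segment a b = closed_segment (x + a) (x + b)"
  using closed_segment_translation[of x a b] by (simp add: image_def)

lemma mem_seg_erosion: "x \<in> seg_erosion W v \<longleftrightarrow> closed_segment (x - v) x \<subseteq> W"
  unfolding seg_erosion_def erosion_def
  using translation_closed_segment[of x "- v" 0] by (simp add: image_def)

lemma erosion_segment_eq_translation:
  "erosion W (closed_segment 0 v) = (+) (- v) ` seg_erosion W v"
proof -
  have "x \<in> erosion W (closed_segment 0 v) \<longleftrightarrow> x + v \<in> seg_erosion W v" for x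
    unfolding mem_seg_erosion erosion_def
    using translation_closed_segment[of x 0 v] by (simp add: image_def)
  then show ?thesis by (force simp: image_iff algebra_simps)
qed

lemma seg_erosion_subset: "seg_erosion W v \<subseteq> W"
  using ends_in_segment(2) by (force simp: mem_seg_erosion)

lemma open_seg_erosion:
  assumes "open W" shows "open (seg_erosion W v)"
proof -
  have "- seg_erosion W v = (\<Union>x\<in>-W. \<Union>y\<in>closed_segment (- v) 0. {x - y})"
    unfolding seg_erosion_def erosion_def by (auto simp: image_subset_iff)
  moreover have "closed (\<Union>x\<in>-W. \<Union>y\<in>closed_segment (- v) 0. {x - y})"
    by (rule closed_compact_differences) (use assms in auto)
  ultimately show ?thesis by (metis closed_open double_complement)
qed

lemma seg_erosion_window:
  assumes "admissible_window W"
  shows "open (seg_erosion W v)" "bounded (seg_erosion W v)" "seg_erosion W v \<in> sets borel"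
proof -
  show "open (seg_erosion W v)"
    using assms open_seg_erosion by (auto simp: admissible_window_def)
  then show "seg_erosion W v \<in> sets borel" by simp
  show "bounded (seg_erosion W v)"
    using assms bounded_subset[OF _ seg_erosion_subset] by (auto simp: admissible_window_def)
qed

lemma sigma_fun_uminus: "sigma_fun (- v) W A = sigma_fun v W A"
  unfolding sigma_fun_def by (simp add: closed_segment_commute algebra_simps)

lemma sigma_fun_scaleR_abs: "sigma_fun (\<epsilon> *\<^sub>R u) W A = sigma_fun (\<bar>\<epsilon>\<bar> *\<^sub>R u) W A"
  by (cases "\<epsilon> \<ge> 0") (auto simp: sigma_fun_uminus[of "\<epsilon> *\<^sub>R u", symmetric])

lemma covario_diff_eq_measure:
  fixes A E :: "'a::euclidean_space set"
  assumes A: "A \<in> sets lebesgue" and E: "E \<in> sets lebesgue" "bounded E"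
  shows "covario 0 E A - covario v E A = measure lebesgue (E \<inter> A - (+) v ` A)"
proof -
  have fin: "E \<inter> A \<in> fmeasurable lebesgue"
    using A E by (intro bounded_set_imp_lmeasurable) (auto intro: bounded_subset)
  have "measure lebesgue (E \<inter> A - A \<inter> (+) v ` A \<inter> E)
      = measure lebesgue (E \<inter> A) - measure lebesgue (A \<inter> (+) v ` A \<inter> E)"
    by (rule measurable_measure_Diff[OF fin]) (use A E lebesgue_sets_translation[OF A] in auto)
  moreover have "E \<inter> A - A \<inter> (+) v ` A \<inter> E = E \<inter> A - (+) v ` A" by blast
  ultimately show ?thesis unfolding covario_def by (simp add: Int_ac image_def)
qed

lemma sigma_fun_eq_measure:
  fixes A :: "'a::euclidean_space set"
  assumes A: "A \<in> sets lebesgue" and W: "admissible_window W" and v: "v \<noteq> 0"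
  shows "norm v * sigma_fun v W A = measure lebesgue (seg_erosion W v \<inter> A - (+) v ` A)
                                  + measure lebesgue (seg_erosion W v \<inter> (+) v ` A - A)"
proof -
  define E where "E = seg_erosion W v"
  have E: "E \<in> sets lebesgue" "bounded E" using seg_erosion_window[OF W] by (auto simp: E_def)
  have E': "(+) (- v) ` E \<in> sets lebesgue" "bounded ((+) (- v) ` E)"
    by (fact lebesgue_sets_translation[OF E(1)], fact bounded_translation[OF E(2)])
  have "norm v * sigma_fun v W A
      = (covario 0 E A - covario v E A) + (covario 0 ((+) (- v) ` E) A - covario (- v) ((+) (- v) ` E) A)"
    using v unfolding sigma_fun_def erosion_segment_eq_translation seg_erosion_def[symmetric] E_def[symmetric]
    by (simp add: field_simps)
  also have "\<dots> = measure lebesgue (E \<inter> A - (+) v ` A)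
                   + measure lebesgue ((+) (- v) ` E \<inter> A - (+) (- v) ` A)"
    by (simp only: covario_diff_eq_measure[OF A E] covario_diff_eq_measure[OF A E'])
  also have "(+) (- v) ` E \<inter> A - (+) (- v) ` A = (+) (- v) ` (E \<inter> (+) v ` A - A)"
    by (force simp: image_iff algebra_simps)
  finally show ?thesis unfolding measure_translation E_def .
qed

lemma sigma_fun_eq_integral:
  fixes A :: "'a::euclidean_space set"
  assumes A: "A \<in> sets borel" and W: "admissible_window W" and v: "v \<noteq> 0"
  shows "norm v * sigma_fun v W A
       = (\<integral>z. indicator (seg_erosion W v) z * \<bar>indicator A z - indicator A (z - v)\<bar> \<partial>lborel)"
proof -
  define E where "E = seg_erosion W v"
  define B where "B = (+) v ` A"
  have B: "B = (\<lambda>z. z - v) -` A" by (force simp: B_def image_iff algebra_simps)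
  have "(\<lambda>z. z - v) -` A \<in> sets borel" by (rule measurable_sets_borel[OF _ A]) auto
  then have sets: "E \<inter> A - B \<in> sets borel" "E \<inter> B - A \<in> sets borel"
    using A seg_erosion_window[OF W] unfolding B E_def by auto
  have "bounded (E \<inter> A - B)" "bounded (E \<inter> B - A)"
    using seg_erosion_window(2)[OF W] bounded_subset[of E] by (auto simp: E_def)
  then have fin: "emeasure lborel (E \<inter> A - B) < \<infinity>" "emeasure lborel (E \<inter> B - A) < \<infinity>"
    using emeasure_bounded_finite by blast+
  have "(\<lambda>z. indicator E z * \<bar>indicator A z - indicator A (z - v)\<bar> :: real)
      = (\<lambda>z. indicator (E \<inter> A - B) z + indicator (E \<inter> B - A) z)"
    by (auto simp: B indicator_def)
  then have "(\<integral>z. indicator E z * \<bar>indicator A z - indicator A (z - v)\<bar> \<partial>lborel)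
      = measure lborel (E \<inter> A - B) + measure lborel (E \<inter> B - A)"
    using sets fin by simp
  also have "\<dots> = norm v * sigma_fun v W A"
    using sigma_fun_eq_measure[OF _ W v, of A] A sets by (simp add: E_def B_def)
  finally show ?thesis unfolding E_def ..
qed

lemma sigma_fun_bounds:
  fixes A :: "'a::euclidean_space set"
  assumes A: "A \<in> sets lebesgue" and W: "admissible_window W" and v: "v \<noteq> 0"
  shows "0 \<le> sigma_fun v W A" "sigma_fun v W A \<le> measure lebesgue W / norm v"
proof -
  define E where "E = seg_erosion W v"
  define B where "B = (+) v ` A"
  have W': "W \<in> lmeasurable" "bounded W"
    using W by (auto simp: admissible_window_def intro!: bounded_set_imp_lmeasurable)
  have "E \<in> sets lebesgue" using seg_erosion_window(3)[OF W] by (simp add: E_def)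
  then have sets: "E \<inter> A - B \<in> lmeasurable" "E \<inter> B - A \<in> lmeasurable"
    using A lebesgue_sets_translation[OF A, of v] seg_erosion_window(2)[OF W, of v]
    by (auto simp: E_def B_def intro!: bounded_set_imp_lmeasurable intro: bounded_subset)
  have sum: "norm v * sigma_fun v W A = measure lebesgue (E \<inter> A - B) + measure lebesgue (E \<inter> B - A)"
    using sigma_fun_eq_measure[OF A W v] by (simp add: E_def B_def)
  have "measure lebesgue (E \<inter> A - B) + measure lebesgue (E \<inter> B - A)
      = measure lebesgue ((E \<inter> A - B) \<union> (E \<inter> B - A))"
  proof -
    have "E \<inter> B - A - (E \<inter> A - B) = E \<inter> B - A" by blast
    then show ?thesis using measure_Un2[OF sets] by simp
  qed
  also have "\<dots> \<le> measure lebesgue W"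
    using W' sets seg_erosion_subset[of W v] by (intro measure_mono_fmeasurable) (auto simp: E_def)
  finally have "norm v * sigma_fun v W A \<le> measure lebesgue W" unfolding sum .
  moreover have "0 \<le> norm v * sigma_fun v W A" unfolding sum by simp
  ultimately show "0 \<le> sigma_fun v W A" "sigma_fun v W A \<le> measure lebesgue W / norm v"
    using v by (simp_all add: zero_le_mult_iff field_simps)
qed

lemma lborel_integral_translate:
  fixes f :: "'a::euclidean_space \<Rightarrow> real"
  assumes "f \<in> borel_measurable borel"
  shows "(\<integral>z. f z \<partial>lborel) = (\<integral>z. f (c + z) \<partial>lborel)"
proof -
  have "(\<integral>z. f z \<partial>lborel) = integral\<^sup>L (distr lborel borel ((+) c)) f"
    by (simp add: lborel_distr_plus)
  also have "\<dots> = (\<integral>z. f (c + z) \<partial>lborel)"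
    by (rule integral_distr) (use assms in auto)
  finally show ?thesis .
qed

lemma integrable_indicator_bounded:
  fixes X :: "'a::euclidean_space set"
  assumes "X \<in> sets borel" "bounded X"
  shows "integrable lborel (indicator X :: 'a \<Rightarrow> real)"
  using assms emeasure_bounded_finite[of X] by (intro integrable_real_indicator) auto

lemma integrable_bounded_by_indicator:
  fixes f :: "'a::euclidean_space \<Rightarrow> real"
  assumes "f \<in> borel_measurable borel" "E \<in> sets borel" "bounded E"
    and "\<And>x. \<bar>f x\<bar> \<le> c * indicator E x"
  shows "integrable lborel f"
proof (rule Bochner_Integration.integrable_bound)
  show "integrable lborel (\<lambda>x. c * indicator E x :: real)"
    using integrable_indicator_bounded[OF assms(2,3)] by simp
  show "AE x in lborel. norm (f x) \<le> norm (c * indicator E x :: real)"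
    using order_trans[OF assms(4) abs_ge_self] by (intro AE_I2) simp
qed (use assms(1) in simp)

lemma eq_0_outside_closure_support: "x \<notin> closure {x. f x \<noteq> 0} \<Longrightarrow> f x = 0"
  using closure_subset[of "{x. f x \<noteq> 0}"] by blast

subsection \<open>Test functions\<close>

context
  fixes U :: "'a::euclidean_space set" and \<phi> :: "'a \<Rightarrow> real" and \<phi>' :: "'a \<Rightarrow> 'a \<Rightarrow> real"
  assumes test: "C1c_test U \<phi> \<phi>'"
begin

lemma C1c_test_has_derivative: "(\<phi> has_derivative \<phi>' x) (at x)"
  using test unfolding C1c_test_def by blast

lemma C1c_test_abs_le: "\<bar>\<phi> x\<bar> \<le> 1"
  using test unfolding C1c_test_def by blast

lemma C1c_test_compact_support: "compact (closure {x. \<phi> x \<noteq> 0})"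
  using test unfolding C1c_test_def by blast

lemma C1c_test_support_subset: "closure {x. \<phi> x \<noteq> 0} \<subseteq> U"
  using test unfolding C1c_test_def by blast

lemma C1c_test_deriv_eq_0:
  assumes x: "x \<notin> closure {x. \<phi> x \<noteq> 0}"
  shows "\<phi>' x = (\<lambda>_. 0)"
proof -
  have "((\<lambda>_. 0) has_derivative \<phi>' x) (at x)"
    by (rule has_derivative_transform_within_open[OF C1c_test_has_derivative, of "- closure {x. \<phi> x \<noteq> 0}"])
       (use x in \<open>auto intro: eq_0_outside_closure_support\<close>)
  then show ?thesis by (rule has_derivative_unique[OF _ has_derivative_const])
qed

lemma C1c_test_deriv_scaleR: "\<phi>' x (c *\<^sub>R v) = c * \<phi>' x v"
  using has_derivative_linear[OF C1c_test_has_derivative] by (simp add: linear_scale)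

lemma continuous_on_C1c_test: "continuous_on UNIV (\<lambda>z. \<phi> (z + c))"
proof -
  have "continuous_on UNIV \<phi>"
    by (meson C1c_test_has_derivative continuous_at_imp_continuous_on has_derivative_continuous)
  then show ?thesis by (rule continuous_on_compose2) (auto intro!: continuous_intros)
qed

lemma continuous_on_C1c_test_deriv: "continuous_on UNIV (\<lambda>x. \<phi>' x v)"
  using test unfolding C1c_test_def by blast

lemma C1c_test_subset: "closure {x. \<phi> x \<noteq> 0} \<subseteq> U' \<Longrightarrow> C1c_test U' \<phi> \<phi>'"
  using test unfolding C1c_test_def by blast

lemma C1c_test_uminus: "C1c_test U (\<lambda>x. - \<phi> x) (\<lambda>x v. - \<phi>' x v)"
  using test unfolding C1c_test_def by (auto intro!: derivative_eq_intros continuous_intros)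

lemma C1c_test_translate:
  assumes sub: "(\<lambda>x. x - c) ` closure {x. \<phi> x \<noteq> 0} \<subseteq> U'"
  shows "C1c_test U' (\<lambda>x. \<phi> (x + c)) (\<lambda>x. \<phi>' (x + c))"
proof -
  have "{x. \<phi> (x + c) \<noteq> 0} = (\<lambda>x. x - c) ` {x. \<phi> x \<noteq> 0}"
    by (force simp: image_iff algebra_simps)
  then have cl: "closure {x. \<phi> (x + c) \<noteq> 0} = (\<lambda>x. x - c) ` closure {x. \<phi> x \<noteq> 0}"
    by (metis closure_translation_subtract)
  have "((\<lambda>x. \<phi> (x + c)) has_derivative \<phi>' (x + c)) (at x)" for x
  proof -
    have "((\<lambda>x. x + c) has_derivative (\<lambda>x. x)) (at x)" by (auto intro!: derivative_eq_intros)
    from has_derivative_compose[OF this C1c_test_has_derivative] show ?thesis by (simp add: o_def)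
  qed
  moreover have "continuous_on UNIV (\<lambda>x. \<phi>' (x + c) v)" for v
    by (rule continuous_on_compose2[OF continuous_on_C1c_test_deriv]) (auto intro!: continuous_intros)
  moreover have "compact ((\<lambda>x. x - c) ` closure {x. \<phi> x \<noteq> 0})"
    using C1c_test_compact_support by (auto intro!: compact_continuous_image continuous_intros)
  ultimately show ?thesis
    unfolding C1c_test_def cl using sub C1c_test_abs_le by auto
qed

lemma C1c_test_deriv_bounded:
  obtains B where "B \<ge> 0" "\<And>x. \<bar>\<phi>' x v\<bar> \<le> B"
proof -
  let ?K = "closure {x. \<phi> x \<noteq> 0}"
  have "compact ((\<lambda>x. \<phi>' x v) ` ?K)"
    using C1c_test_compact_support continuous_on_C1c_test_deriv
    by (intro compact_continuous_image) (auto intro: continuous_on_subset)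
  then obtain B where B: "\<And>y. y \<in> (\<lambda>x. \<phi>' x v) ` ?K \<Longrightarrow> norm y \<le> B"
    using compact_imp_bounded bounded_iff by metis
  have "\<bar>\<phi>' x v\<bar> \<le> max B 0" for x
  proof (cases "x \<in> ?K")
    case True
    then show ?thesis using B[of "\<phi>' x v"] by force
  qed (simp add: C1c_test_deriv_eq_0)
  then show ?thesis by (intro that[of "max B 0"]) auto
qed

lemma C1c_test_has_real_derivative_line:
  "((\<lambda>s. \<phi> (z + s *\<^sub>R u)) has_real_derivative \<phi>' (z + s *\<^sub>R u) u) (at s)"
proof -
  have "((\<lambda>s. z + s *\<^sub>R u) has_derivative (\<lambda>s. s *\<^sub>R u)) (at s)"
    by (auto intro!: derivative_eq_intros)
  from has_derivative_compose[OF this C1c_test_has_derivative]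
  have "((\<lambda>s. \<phi> (z + s *\<^sub>R u)) has_derivative (\<lambda>t. t * \<phi>' (z + s *\<^sub>R u) u)) (at s)"
    by (simp add: o_def C1c_test_deriv_scaleR)
  then show ?thesis by (rule has_derivative_imp_has_field_derivative) simp
qed

lemma C1c_test_lipschitz_line:
  assumes B: "\<And>x. \<bar>\<phi>' x u\<bar> \<le> B"
  shows "\<bar>\<phi> (z + h *\<^sub>R u) - \<phi> z\<bar> \<le> B * \<bar>h\<bar>"
proof -
  note D = C1c_test_has_real_derivative_line[of z u]
  consider "h = 0" | "h \<noteq> 0" by blast
  then show ?thesis
  proof cases
    case 2
    obtain y where "\<phi> (z + h *\<^sub>R u) - \<phi> z = h * \<phi>' (z + y *\<^sub>R u) u"
    proof (cases "h > 0")
      case True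
      from MVT2[OF this D] obtain y
        where "\<phi> (z + h *\<^sub>R u) - \<phi> (z + 0 *\<^sub>R u) = (h - 0) * \<phi>' (z + y *\<^sub>R u) u" by blast
      then show ?thesis using that[of y] by simp
    next
      case False
      then have "h < 0" using 2 by simp
      from MVT2[OF this D] obtain y
        where "\<phi> (z + 0 *\<^sub>R u) - \<phi> (z + h *\<^sub>R u) = (0 - h) * \<phi>' (z + y *\<^sub>R u) u" by blast
      then show ?thesis using that[of y] by (simp add: algebra_simps)
    qed
    then show ?thesis
      using mult_right_mono[OF B[of "z + y *\<^sub>R u"] abs_ge_zero[of h]] by (simp add: abs_mult mult.commute)
  qed simp
qed

lemma borel_measurable_C1c_test:
  "(\<lambda>z. \<phi> (z + c)) \<in> borel_measurable borel" "(\<lambda>x. \<phi>' x v) \<in> borel_measurable borel"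
  using continuous_on_C1c_test continuous_on_C1c_test_deriv by (auto intro: borel_measurable_continuous_onI)

lemma integrable_C1c_test:
  assumes g: "g \<in> borel_measurable borel" "\<And>z. \<bar>g z\<bar> \<le> 1"
  shows "integrable lborel (\<lambda>z. g z * \<phi> (z + c))"
proof -
  let ?E = "(\<lambda>x. x - c) ` closure {x. \<phi> x \<noteq> 0}"
  have E: "compact ?E"
    using C1c_test_compact_support by (auto intro!: compact_continuous_image continuous_intros)
  have "\<bar>g x * \<phi> (x + c)\<bar> \<le> 1 * indicator ?E x" for x
  proof (cases "x \<in> ?E")
    case True
    then show ?thesis using g(2)[of x] C1c_test_abs_le[of "x + c"] by (simp add: abs_mult mult_le_one)
  next
    case False
    then have "x + c \<notin> closure {x. \<phi> x \<noteq> 0}" by (force simp: image_iff)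
    then have "\<phi> (x + c) = 0" by (rule eq_0_outside_closure_support)
    then show ?thesis using False by simp
  qed
  then show ?thesis
    using E g(1) borel_measurable_C1c_test(1)
    by (intro integrable_bounded_by_indicator[of _ ?E 1]) (auto simp: compact_imp_closed compact_imp_bounded)
qed

lemma integrable_C1c_test_deriv:
  assumes g: "g \<in> borel_measurable borel" "\<And>z. \<bar>g z\<bar> \<le> 1"
  shows "integrable lborel (\<lambda>z. g z * \<phi>' z v)"
proof -
  let ?K = "closure {x. \<phi> x \<noteq> 0}"
  obtain B where B: "B \<ge> 0" "\<And>x. \<bar>\<phi>' x v\<bar> \<le> B" using C1c_test_deriv_bounded by blast
  have "\<bar>g x * \<phi>' x v\<bar> \<le> B * indicator ?K x" for x
  proof (cases "x \<in> ?K")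
    case True
    then show ?thesis
      using mult_mono[OF g(2)[of x] B(2)[of x]] by (simp add: abs_mult)
  qed (simp add: C1c_test_deriv_eq_0)
  then show ?thesis
    using C1c_test_compact_support g(1) borel_measurable_C1c_test(2)
    by (intro integrable_bounded_by_indicator[of _ ?K B]) (auto simp: compact_imp_bounded)
qed

lemma integral_C1c_test_deriv_restrict:
  assumes A: "A \<in> sets borel"
  shows "(\<integral>x. indicator (A \<inter> U) x * \<phi>' x u \<partial>lebesgue) = (\<integral>x. indicator A x * \<phi>' x u \<partial>lborel)"
proof -
  have "(\<integral>x. indicator (A \<inter> U) x * \<phi>' x u \<partial>lebesgue) = (\<integral>x. indicator A x * \<phi>' x u \<partial>lebesgue)"
  proof (intro Bochner_Integration.integral_cong refl)
    fix x
    show "indicator (A \<inter> U) x * \<phi>' x u = indicator A x * \<phi>' x u"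
      using C1c_test_support_subset C1c_test_deriv_eq_0[of x]
      by (cases "x \<in> closure {x. \<phi> x \<noteq> 0}") (auto simp: indicator_def)
  qed
  also have "\<dots> = (\<integral>x. indicator A x * \<phi>' x u \<partial>lborel)"
    by (rule integral_completion) (use A borel_measurable_C1c_test(2)[of u] in measurable)
  finally show ?thesis .
qed

lemma C1c_test_le_dir_variation:
  assumes A: "A \<in> sets borel"
  shows "ereal (\<integral>x. indicator A x * \<phi>' x u \<partial>lborel) \<le> dir_variation u A U"
proof -
  have "ereal (\<integral>x. indicator (A \<inter> U) x * snd (\<phi>, \<phi>') x u \<partial>lebesgue) \<le> dir_variation u A U"
    unfolding dir_variation_def by (rule SUP_upper) (use test in auto)
  then show ?thesis using integral_C1c_test_deriv_restrict[OF A] by simp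
qed

lemma integral_indicator_times_translate_diff:
  assumes A: "A \<in> sets borel"
  shows "(\<integral>z. indicator A z * (\<phi> (z + v) - \<phi> z) \<partial>lborel)
       = (\<integral>z. (indicator A (z - v) - indicator A z) * \<phi> z \<partial>lborel)"
proof -
  have mA: "(indicator A :: 'a \<Rightarrow> real) \<in> borel_measurable borel" "\<And>z. \<bar>indicator A z :: real\<bar> \<le> 1"
    using A by auto
  have i: "integrable lborel (\<lambda>z. indicator A (z - v) * \<phi> (z + 0))"
    using A by (intro integrable_C1c_test) (auto simp: indicator_def)
  have "(\<integral>z. indicator A z * (\<phi> (z + v) - \<phi> z) \<partial>lborel)
      = (\<integral>z. indicator A z * \<phi> (z + v) \<partial>lborel) - (\<integral>z. indicator A z * \<phi> (z + 0) \<partial>lborel)"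
    using Bochner_Integration.integral_diff[OF integrable_C1c_test[OF mA, of v] integrable_C1c_test[OF mA, of 0]]
    by (simp add: right_diff_distrib)
  also have "(\<integral>z. indicator A z * \<phi> (z + v) \<partial>lborel) = (\<integral>z. indicator A (-v + z) * \<phi> (-v + z + v) \<partial>lborel)"
    by (intro lborel_integral_translate) (use A borel_measurable_C1c_test(1) in measurable)
  also have "\<dots> - (\<integral>z. indicator A z * \<phi> (z + 0) \<partial>lborel)
      = (\<integral>z. (indicator A (z - v) - indicator A z) * \<phi> z \<partial>lborel)"
    using Bochner_Integration.integral_diff[OF i integrable_C1c_test[OF mA, of 0]] by (simp add: left_diff_distrib)
  finally show ?thesis .
qed

lemma integral_signed_indicator_C1c_test:
  assumes A: "A \<in> sets borel"
  shows "(\<integral>z. (indicator (U \<inter> A - (+) v ` A) z - indicator (U \<inter> (+) v ` A - A) z) * \<phi> z \<partial>lborel)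
       = (\<integral>z. indicator A z * (\<phi> z - \<phi> (z + v)) \<partial>lborel)"
proof -
  have "(\<integral>z. (indicator (U \<inter> A - (+) v ` A) z - indicator (U \<inter> (+) v ` A - A) z) * \<phi> z \<partial>lborel)
      = (\<integral>z. - ((indicator A (z - v) - indicator A z) * \<phi> z) \<partial>lborel)"
  proof (rule Bochner_Integration.integral_cong)
    fix z
    show "(indicator (U \<inter> A - (+) v ` A) z - indicator (U \<inter> (+) v ` A - A) z) * \<phi> z
        = - ((indicator A (z - v) - indicator A z) * \<phi> z)"
    proof (cases "z \<in> U")
      case False
      then have "\<phi> z = 0"
        using C1c_test_support_subset by (intro eq_0_outside_closure_support) blast
      then show ?thesis by simp
    qed (auto simp: indicator_def image_iff algebra_simps)
  qed simp
  also have "\<dots> = (\<integral>z. indicator A z * (\<phi> z - \<phi> (z + v)) \<partial>lborel)"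
    unfolding Bochner_Integration.integral_minus integral_indicator_times_translate_diff[OF A, symmetric]
    by (simp flip: Bochner_Integration.integral_minus add: algebra_simps)
  finally show ?thesis .
qed

lemma C1c_test_diff_quotient_bound:
  assumes B: "\<And>x. \<bar>\<phi>' x u\<bar> \<le> B" and t: "t \<noteq> 0" "\<bar>t\<bar> \<le> H"
  shows "\<bar>(\<phi> (z + t *\<^sub>R u) - \<phi> z) / t - \<phi>' z u\<bar>
    \<le> 2 * B * indicator {x + y | x y. x \<in> closure {x. \<phi> x \<noteq> 0} \<and> y \<in> cball 0 (H * norm u)} z"
    (is "?s \<le> 2 * B * indicator ?K' z")
proof (cases "z \<in> ?K'")
  case True
  have "\<bar>(\<phi> (z + t *\<^sub>R u) - \<phi> z) / t\<bar> \<le> B"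
    using C1c_test_lipschitz_line[OF B, of z t] t(1) by (simp add: abs_divide divide_le_eq)
  moreover have "?s \<le> \<bar>(\<phi> (z + t *\<^sub>R u) - \<phi> z) / t\<bar> + \<bar>\<phi>' z u\<bar>"
    by (rule abs_triangle_ineq4)
  ultimately show ?thesis using True B[of z] by simp
next
  case False
  have "- (t *\<^sub>R u) \<in> cball 0 (H * norm u)" "0 \<in> cball 0 (H * norm u)"
    using t(2) order_trans[OF abs_ge_zero t(2)] by (auto simp: mult_right_mono)
  moreover have "z = (z + t *\<^sub>R u) + - (t *\<^sub>R u)" "z = z + 0" by simp_all
  ultimately have "z + t *\<^sub>R u \<notin> closure {x. \<phi> x \<noteq> 0}" "z \<notin> closure {x. \<phi> x \<noteq> 0}"
    using False by blast+
  then have "\<phi> (z + t *\<^sub>R u) = 0" "\<phi> z = 0" "\<phi>' z = (\<lambda>_. 0)"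
    by (auto intro: eq_0_outside_closure_support[of _ \<phi>] C1c_test_deriv_eq_0)
  then show ?thesis using False by simp
qed

lemma C1c_test_diff_quotient_L1:
  "((\<lambda>t. \<integral>z. \<bar>(\<phi> (z + t *\<^sub>R u) - \<phi> z) / t - \<phi>' z u\<bar> \<partial>lborel) \<longlongrightarrow> 0) (at 0)"
  unfolding tendsto_at_iff_sequentially o_def
proof (intro allI impI)
  fix h :: "nat \<Rightarrow> real" assume "\<forall>n. h n \<in> UNIV - {0}" and h: "h \<longlonglongrightarrow> 0"
  then have hn: "\<And>n. h n \<in> UNIV - {0}" by blast
  obtain B where B: "\<And>x. \<bar>\<phi>' x u\<bar> \<le> B" using C1c_test_deriv_bounded by blast
  obtain H where H: "\<And>n. \<bar>h n\<bar> \<le> H"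
    using convergent_imp_Bseq[OF convergentI[OF h]] unfolding Bseq_def real_norm_def by blast
  define K' where "K' = {x + y | x y. x \<in> closure {x. \<phi> x \<noteq> 0} \<and> y \<in> cball 0 (H * norm u)}"
  have "compact K'"
    unfolding K'_def by (rule compact_sums[OF C1c_test_compact_support]) simp
  then have "integrable lborel (\<lambda>z. 2 * B * indicator K' z :: real)"
    using integrable_indicator_bounded[of K'] by (simp add: compact_imp_closed compact_imp_bounded)
  moreover have "continuous_on UNIV (\<lambda>z. \<bar>(\<phi> (z + h n *\<^sub>R u) - \<phi> (z + 0)) / h n - \<phi>' z u\<bar>)" for n
    using hn by (intro continuous_intros continuous_on_C1c_test continuous_on_C1c_test_deriv) auto
  moreover have "(\<lambda>n. (\<phi> (z + h n *\<^sub>R u) - \<phi> z) / h n) \<longlonglongrightarrow> \<phi>' z u" for z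
    using C1c_test_has_real_derivative_line[of z u 0] hn h
    unfolding DERIV_def tendsto_at_iff_sequentially o_def by simp
  then have "(\<lambda>n. \<bar>(\<phi> (z + h n *\<^sub>R u) - \<phi> z) / h n - \<phi>' z u\<bar>) \<longlonglongrightarrow> 0" for z
    by (intro tendsto_rabs_zero LIM_zero)
  ultimately show "(\<lambda>n. \<integral>z. \<bar>(\<phi> (z + h n *\<^sub>R u) - \<phi> z) / h n - \<phi>' z u\<bar> \<partial>lborel) \<longlonglongrightarrow> 0"
    using integral_dominated_convergence[where w="\<lambda>z. 2 * B * indicator K' z" and f="\<lambda>z::'a. 0::real"]
      C1c_test_diff_quotient_bound[OF B, of "h _" H] hn H unfolding K'_def
    by (auto simp: borel_measurable_continuous_onI)
qed

lemma abs_integral_diff_quotient_le: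
  assumes g: "g \<in> borel_measurable borel" "\<And>z. \<bar>g z\<bar> \<le> 1" and t: "t \<noteq> 0"
  shows "\<bar>(\<integral>z. g z * (\<phi> (z + t *\<^sub>R u) - \<phi> z) \<partial>lborel) / t - (\<integral>z. g z * \<phi>' z u \<partial>lborel)\<bar>
     \<le> (\<integral>z. \<bar>(\<phi> (z + t *\<^sub>R u) - \<phi> z) / t - \<phi>' z u\<bar> \<partial>lborel)"
proof -
  have one: "(\<lambda>z. 1::real) \<in> borel_measurable borel" "\<And>z. \<bar>1::real\<bar> \<le> 1" by auto
  have int1: "integrable lborel (\<lambda>z. \<phi> (z + c))" "integrable lborel (\<lambda>z. \<phi>' z v)" for c v
    using integrable_C1c_test[OF one, of c] integrable_C1c_test_deriv[OF one, of v] by simp_all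
  note int = integrable_C1c_test[OF g] integrable_C1c_test_deriv[OF g] int1
  define D where "D z = (\<phi> (z + t *\<^sub>R u) - \<phi> (z + 0)) / t - \<phi>' z u" for z
  define a where "a z = g z * \<phi> (z + t *\<^sub>R u)" for z
  define b where "b z = g z * \<phi> (z + 0)" for z
  define c where "c z = g z * \<phi>' z u" for z
  have ia: "integrable lborel a" and ib: "integrable lborel b" and ic: "integrable lborel c"
    unfolding a_def b_def c_def by (fact int)+
  have gD: "(\<lambda>z. g z * D z) = (\<lambda>z. (a z - b z) / t - c z)"
    by (simp add: a_def b_def c_def D_def fun_eq_iff right_diff_distrib diff_divide_distrib)
  have "(\<integral>z. g z * (\<phi> (z + t *\<^sub>R u) - \<phi> z) \<partial>lborel) / t - (\<integral>z. g z * \<phi>' z u \<partial>lborel)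
      = ((\<integral>z. a z - b z \<partial>lborel) / t) - integral\<^sup>L lborel c"
    by (simp add: a_def b_def c_def[abs_def] right_diff_distrib)
  also have "\<dots> = (\<integral>z. (a z - b z) / t - c z \<partial>lborel)"
    using ia ib ic by simp
  also have "\<dots> = (\<integral>z. g z * D z \<partial>lborel)" unfolding gD ..
  also have "\<bar>\<dots>\<bar> \<le> (\<integral>z. \<bar>D z\<bar> \<partial>lborel)"
  proof (rule integral_abs_bound_integral)
    show "integrable lborel (\<lambda>z. \<bar>D z\<bar>)"
      unfolding D_def by (intro integrable_abs Bochner_Integration.integrable_diff integrable_divide_zero int)
    show "integrable lborel (\<lambda>z. g z * D z)" unfolding gD using ia ib ic by simp
    show "\<bar>g z * D z\<bar> \<le> \<bar>D z\<bar>" for z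
      using g(2)[of z] by (simp add: abs_mult mult_left_le_one_le)
  qed
  finally show ?thesis unfolding D_def by simp
qed

lemma C1c_test_integral_diff_quotient:
  assumes g: "g \<in> borel_measurable borel" "\<And>z. \<bar>g z\<bar> \<le> 1"
  shows "((\<lambda>t. (\<integral>z. g z * (\<phi> (z + t *\<^sub>R u) - \<phi> z) \<partial>lborel) / t) \<longlongrightarrow> (\<integral>z. g z * \<phi>' z u \<partial>lborel)) (at 0)"
proof -
  have "((\<lambda>t. (\<integral>z. g z * (\<phi> (z + t *\<^sub>R u) - \<phi> z) \<partial>lborel) / t - (\<integral>z. g z * \<phi>' z u \<partial>lborel)) \<longlongrightarrow> 0) (at 0)"
    by (rule Lim_null_comparison[OF _ C1c_test_diff_quotient_L1[of u]])
       (auto simp: eventually_at_filter abs_integral_diff_quotient_le[OF g] intro!: always_eventually)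
  then show ?thesis by (rule LIM_zero_cancel)
qed

end

lemma has_real_derivative_integral_C1c_test:
  assumes test: "C1c_test U \<phi> \<phi>'"
    and g: "g \<in> borel_measurable borel" "\<And>z. \<bar>g z\<bar> \<le> 1"
  shows "((\<lambda>s. \<integral>z. g z * \<phi> (z + s *\<^sub>R u) \<partial>lborel) has_real_derivative
           (\<integral>z. g z * \<phi>' (z + s *\<^sub>R u) u \<partial>lborel)) (at s)"
proof -
  have "C1c_test UNIV (\<lambda>x. \<phi> (x + s *\<^sub>R u)) (\<lambda>x. \<phi>' (x + s *\<^sub>R u))"
    by (rule C1c_test_translate[OF test]) simp
  from C1c_test_integral_diff_quotient[OF this g, of u]
  have "((\<lambda>t. (\<integral>z. g z * (\<phi> (z + t *\<^sub>R u + s *\<^sub>R u) - \<phi> (z + s *\<^sub>R u)) \<partial>lborel) / t)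
          \<longlongrightarrow> (\<integral>z. g z * \<phi>' (z + s *\<^sub>R u) u \<partial>lborel)) (at 0)" .
  moreover have "(\<integral>z. g z * (\<phi> (z + t *\<^sub>R u + s *\<^sub>R u) - \<phi> (z + s *\<^sub>R u)) \<partial>lborel)
      = (\<integral>z. g z * \<phi> (z + (s + t) *\<^sub>R u) \<partial>lborel) - (\<integral>z. g z * \<phi> (z + s *\<^sub>R u) \<partial>lborel)" for t
    using integrable_C1c_test[OF test g]
    by (simp add: right_diff_distrib scaleR_add_left add.assoc add.commute[of "t *\<^sub>R u"])
  ultimately show ?thesis by (simp add: DERIV_def)
qed

subsection \<open>The lower bound\<close>

lemma C1c_test_integral_le_sigma_fun:
  fixes A :: "'a::euclidean_space set"
  assumes test: "C1c_test (seg_erosion W v) \<psi> \<psi>'"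
    and A: "A \<in> sets borel" and W: "admissible_window W" and v: "v \<noteq> 0"
  shows "(\<integral>z. (indicator A (z - v) - indicator A z) * \<psi> z \<partial>lborel) \<le> norm v * sigma_fun v W A"
  unfolding sigma_fun_eq_integral[OF A W v]
proof (rule integral_mono)
  let ?E = "seg_erosion W v"
  have "(\<lambda>z. indicator A (z - v) - indicator A z :: real) \<in> borel_measurable borel" using A by measurable
  then show "integrable lborel (\<lambda>z. (indicator A (z - v) - indicator A z) * \<psi> z)"
    using integrable_C1c_test[OF test, of _ 0] by (simp add: indicator_def)
  have "(\<lambda>z. indicator ?E z * \<bar>indicator A z - indicator A (z - v)\<bar> :: real) \<in> borel_measurable borel"
    using A seg_erosion_window(3)[OF W] by measurable
  then show "integrable lborel (\<lambda>z. indicator ?E z * \<bar>indicator A z - indicator A (z - v)\<bar> :: real)"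
    using seg_erosion_window[OF W]
    by (intro integrable_bounded_by_indicator[where E="?E" and c=1]) (auto simp: indicator_def)
  fix z
  show "(indicator A (z - v) - indicator A z) * \<psi> z \<le> indicator ?E z * \<bar>indicator A z - indicator A (z - v)\<bar>"
  proof (cases "z \<in> closure {x. \<psi> x \<noteq> 0}")
    case True
    then have "z \<in> ?E" using C1c_test_support_subset[OF test] by blast
    have "(indicator A (z - v) - indicator A z) * \<psi> z \<le> \<bar>indicator A (z - v) - indicator A z\<bar> * \<bar>\<psi> z\<bar>"
      by (metis abs_ge_self abs_mult)
    also have "\<dots> \<le> \<bar>indicator A (z - v) - indicator A z\<bar>"
      using C1c_test_abs_le[OF test, of z] by (intro mult_left_le) auto
    finally show ?thesis using \<open>z \<in> ?E\<close> by (simp add: abs_minus_commute)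
  next
    case False
    then show ?thesis using eq_0_outside_closure_support[OF False] by simp
  qed
qed

lemma closure_support_subset_seg_erosion:
  assumes test: "C1c_test W \<phi> \<phi>'" and W: "open W"
  obtains \<delta> where "\<delta> > 0" "\<And>v. norm v < \<delta> \<Longrightarrow> closure {x. \<phi> x \<noteq> 0} \<subseteq> seg_erosion W v"
proof -
  obtain \<delta> where \<delta>: "\<delta> > 0" "(\<Union>x\<in>closure {x. \<phi> x \<noteq> 0}. cball x \<delta>) \<subseteq> W"
    using compact_subset_open_imp_cball_epsilon_subset[OF C1c_test_compact_support[OF test] W
        C1c_test_support_subset[OF test]] by blast
  have "closed_segment (x - v) x \<subseteq> cball x \<delta>" if "norm v < \<delta>" for x v
  proof
    fix y assume "y \<in> closed_segment (x - v) x"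
    then have "norm (y - x) \<le> norm (x - v - x)"
      by (intro segment_bound1) (simp add: closed_segment_commute)
    then show "y \<in> cball x \<delta>" using that by (simp add: dist_norm norm_minus_commute)
  qed
  then show ?thesis using \<delta> by (intro that[of \<delta>]) (fastforce simp: mem_seg_erosion)+
qed

lemma dir_variation_le_Liminf_sigma_fun:
  fixes A :: "'a::euclidean_space set"
  assumes A: "A \<in> sets borel" and W: "admissible_window W" and u: "norm u = 1"
  shows "dir_variation u A W \<le> Liminf (at_right 0) (\<lambda>t. ereal (sigma_fun (t *\<^sub>R u) W A))"
  unfolding dir_variation_def
proof (rule SUP_least)
  have u0: "u \<noteq> 0" using u by auto
  fix p assume "p \<in> {(\<phi>, \<phi>'). C1c_test W \<phi> \<phi>'}"
  then obtain \<phi> \<phi>' where p: "p = (\<phi>, \<phi>')" and test: "C1c_test W \<phi> \<phi>'" by auto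
  define q where "q t = (\<integral>z. indicator A z * (\<phi> (z + t *\<^sub>R u) - \<phi> z) \<partial>lborel) / t" for t
  have "(q \<longlongrightarrow> (\<integral>x. indicator A x * \<phi>' x u \<partial>lborel)) (at_right 0)"
    using C1c_test_integral_diff_quotient[OF test, of "indicator A" u] A
    unfolding q_def by (auto intro: tendsto_mono[OF at_le])
  then have lim: "ereal (\<integral>x. indicator A x * \<phi>' x u \<partial>lborel) = Liminf (at_right 0) (\<lambda>t. ereal (q t))"
    by (intro lim_imp_Liminf[symmetric]) auto
  obtain \<delta> where \<delta>: "\<delta> > 0" "\<And>v. norm v < \<delta> \<Longrightarrow> closure {x. \<phi> x \<noteq> 0} \<subseteq> seg_erosion W v"
    using closure_support_subset_seg_erosion[OF test] W unfolding admissible_window_def by blast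
  have "q t \<le> sigma_fun (t *\<^sub>R u) W A" if t: "t \<in> {0<..<\<delta>}" for t
  proof -
    have "C1c_test (seg_erosion W (t *\<^sub>R u)) \<phi> \<phi>'"
      using t u by (intro C1c_test_subset[OF test] \<delta>(2)) auto
    from C1c_test_integral_le_sigma_fun[OF this A W]
    have "t * q t \<le> t * sigma_fun (t *\<^sub>R u) W A"
      using t u u0 unfolding q_def integral_indicator_times_translate_diff[OF test A] by auto
    then show ?thesis using t by simp
  qed
  then have "\<forall>\<^sub>F t in at_right 0. ereal (q t) \<le> ereal (sigma_fun (t *\<^sub>R u) W A)"
    using eventually_at_right_real[OF \<delta>(1)] by (auto elim: eventually_mono)
  then have "Liminf (at_right 0) (\<lambda>t. ereal (q t)) \<le> Liminf (at_right 0) (\<lambda>t. ereal (sigma_fun (t *\<^sub>R u) W A))"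
    by (rule Liminf_mono)
  then show "ereal (\<integral>x. indicator (A \<inter> W) x * snd p x u \<partial>lebesgue)
      \<le> Liminf (at_right 0) (\<lambda>t. ereal (sigma_fun (t *\<^sub>R u) W A))"
    unfolding p snd_conv integral_C1c_test_deriv_restrict[OF test A] lim .
qed

subsection \<open>\<open>C\<^sup>1\<close> Urysohn functions\<close>

lemma has_real_derivative_pos_part_square:
  "((\<lambda>t::real. (max 0 t)\<^sup>2) has_real_derivative 2 * max 0 x) (at x)"
proof -
  consider "x > 0" | "x < 0" | "x = 0" by linarith
  then show ?thesis
  proof cases
    case 1
    have "((\<lambda>t::real. t\<^sup>2) has_real_derivative 2 * max 0 x) (at x)"
      using 1 by (auto intro!: derivative_eq_intros)
    then show ?thesis
      by (rule has_field_derivative_transform_within_open[of _ _ _ "{0<..}"]) (use 1 in auto)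
  next
    case 2
    have "((\<lambda>t::real. 0) has_real_derivative 2 * max 0 x) (at x)" using 2 by simp
    then show ?thesis
      by (rule has_field_derivative_transform_within_open[of _ _ _ "{..<0}"]) (use 2 in auto)
  next
    case 3
    have "\<bar>(max 0 y)\<^sup>2 / y\<bar> \<le> \<bar>y\<bar>" for y :: real
      by (cases "y > 0") (simp_all add: power2_eq_square)
    then have "((\<lambda>y::real. (max 0 y)\<^sup>2 / y) \<longlongrightarrow> 0) (at 0)"
      by (intro Lim_null_comparison[OF always_eventually tendsto_rabs_zero[OF tendsto_ident_at]]) auto
    then show ?thesis using 3 by (simp add: DERIV_def)
  qed
qed

definition bump :: "'a::euclidean_space \<Rightarrow> real \<Rightarrow> 'a \<Rightarrow> real" where
  "bump c r x = (max 0 (r\<^sup>2 - (x - c) \<bullet> (x - c)))\<^sup>2"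

lemma has_derivative_bump:
  "(bump c r has_derivative (\<lambda>k. - 4 * max 0 (r\<^sup>2 - (x - c) \<bullet> (x - c)) * ((x - c) \<bullet> k))) (at x)"
proof -
  have "((\<lambda>x. r\<^sup>2 - (x - c) \<bullet> (x - c)) has_derivative (\<lambda>k. - 2 * ((x - c) \<bullet> k))) (at x)"
    by (auto intro!: derivative_eq_intros simp: inner_commute)
  from has_derivative_compose[OF this
      has_field_derivative_imp_has_derivative[OF has_real_derivative_pos_part_square]]
  show ?thesis unfolding bump_def[abs_def] by (simp add: o_def mult.assoc)
qed

lemma bump_nonneg: "0 \<le> bump c r x"
  by (simp add: bump_def)

lemma bump_neq_0_imp_dist: "bump c r x \<noteq> 0 \<Longrightarrow> r > 0 \<Longrightarrow> dist c x < r"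
  by (auto simp: bump_def max_def dist_norm norm_minus_commute power2_norm_eq_inner[symmetric]
      split: if_splits intro: power_less_imp_less_base)

lemma bump_lower_bound:
  assumes "dist c x \<le> s" "s \<le> r" "0 \<le> s"
  shows "(r\<^sup>2 - s\<^sup>2)\<^sup>2 \<le> bump c r x"
proof -
  have "(x - c) \<bullet> (x - c) \<le> s\<^sup>2"
    using assms by (simp add: dist_norm norm_minus_commute power2_norm_eq_inner[symmetric] power_mono)
  moreover have "0 \<le> r\<^sup>2 - s\<^sup>2" using assms by (simp add: power_mono)
  ultimately show ?thesis unfolding bump_def by (intro power_mono) auto
qed

lemma C1c_test_normalize:
  fixes S :: "'a::euclidean_space \<Rightarrow> real"
  assumes deriv: "\<And>x. (S has_derivative S' x) (at x)" and cont: "\<And>v. continuous_on UNIV (\<lambda>x. S' x v)"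
    and nonneg: "\<And>x. 0 \<le> S x" and L: "compact L" "L \<subseteq> U" "\<And>x. S x \<noteq> 0 \<Longrightarrow> x \<in> L"
    and \<eta>: "\<eta> > 0"
  shows "C1c_test U (\<lambda>x. S x / (S x + \<eta>)) (\<lambda>x k. \<eta> / (S x + \<eta>)\<^sup>2 * S' x k)"
proof -
  have pos: "S x + \<eta> > 0" for x using nonneg[of x] \<eta> by linarith
  have "((\<lambda>x. S x / (S x + \<eta>)) has_derivative (\<lambda>k. \<eta> / (S x + \<eta>)\<^sup>2 * S' x k)) (at x)" for x
    using deriv pos[of x] by (auto intro!: derivative_eq_intros simp: power2_eq_square field_simps)
  moreover have "continuous_on UNIV (\<lambda>x. \<eta> / (S x + \<eta>)\<^sup>2 * S' x v)" for v
  proof -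
    have "continuous_on UNIV S"
      using deriv by (meson continuous_at_imp_continuous_on has_derivative_continuous)
    moreover have "(S x + \<eta>)\<^sup>2 \<noteq> 0" for x using pos[of x] by simp
    ultimately show ?thesis by (intro continuous_intros cont) auto
  qed
  moreover have "closure {x. S x / (S x + \<eta>) \<noteq> 0} \<subseteq> L"
    using L(1,3) by (intro closure_minimal) (auto intro: compact_imp_closed)
  moreover from this have "compact (closure {x. S x / (S x + \<eta>) \<noteq> 0})"
    using L(1) by (meson closed_closure compact_imp_bounded bounded_subset compact_eq_bounded_closed)
  moreover have "\<bar>S x / (S x + \<eta>)\<bar> \<le> 1" for x
    using nonneg[of x] pos[of x] \<eta> by simp
  ultimately show ?thesis using L(2) unfolding C1c_test_def by blast
qed

lemma C1c_test_urysohn: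
  fixes K U :: "'a::euclidean_space set"
  assumes K: "compact K" and U: "open U" "K \<subseteq> U" and \<theta>: "\<theta> > 0"
  obtains \<psi> \<psi>' where "C1c_test U \<psi> \<psi>'" "\<And>x. 0 \<le> \<psi> x" "\<And>x. x \<in> K \<Longrightarrow> 1 - \<theta> \<le> \<psi> x"
proof -
  obtain r where r: "r > 0" "(\<Union>x\<in>K. cball x r) \<subseteq> U"
    using compact_subset_open_imp_cball_epsilon_subset[OF K U] by blast
  obtain C where C: "C \<subseteq> K" "finite C" "K \<subseteq> (\<Union>c\<in>C. ball c (r / 2))"
    using compactE_image[OF K, of K "\<lambda>c. ball c (r / 2)"] r(1) by force
  define S where "S x = (\<Sum>c\<in>C. bump c r x)" for x
  define S' where "S' x k = (\<Sum>c\<in>C. - 4 * max 0 (r\<^sup>2 - (x - c) \<bullet> (x - c)) * ((x - c) \<bullet> k))" for x k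
  define m where "m = (r\<^sup>2 - (r / 2)\<^sup>2)\<^sup>2"
  define \<eta> where "\<eta> = m * \<theta>"
  have S0: "0 \<le> S x" for x unfolding S_def by (intro sum_nonneg bump_nonneg)
  have m: "m > 0" using r(1) by (simp add: m_def power2_eq_square)
  have \<eta>: "\<eta> > 0" using m \<theta> by (simp add: \<eta>_def)
  have "C1c_test U (\<lambda>x. S x / (S x + \<eta>)) (\<lambda>x k. \<eta> / (S x + \<eta>)\<^sup>2 * S' x k)"
  proof (rule C1c_test_normalize[OF _ _ S0 _ _ _ \<eta>])
    show "(S has_derivative S' x) (at x)" for x
      unfolding S_def[abs_def] S'_def by (intro has_derivative_sum has_derivative_bump)
    show "continuous_on UNIV (\<lambda>x. S' x v)" for v
      unfolding S'_def by (intro continuous_intros)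
    show "compact (\<Union>c\<in>C. cball c r)" using C(2) by auto
    show "(\<Union>c\<in>C. cball c r) \<subseteq> U" using C(1) r(2) by blast
    show "x \<in> (\<Union>c\<in>C. cball c r)" if "S x \<noteq> 0" for x
    proof -
      obtain c where "c \<in> C" "bump c r x \<noteq> 0" using \<open>S x \<noteq> 0\<close> unfolding S_def by (meson sum.neutral)
      then show ?thesis using bump_neq_0_imp_dist[of c r x] r(1) by force
    qed
  qed
  moreover have "1 - \<theta> \<le> S x / (S x + \<eta>)" if "x \<in> K" for x
  proof -
    obtain c where c: "c \<in> C" "dist c x < r / 2" using C(3) \<open>x \<in> K\<close> by auto
    have "m \<le> bump c r x" unfolding m_def using c r(1) by (intro bump_lower_bound) auto
    also have "\<dots> \<le> S x" unfolding S_def using c(1) C(2) bump_nonneg by (intro member_le_sum) auto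
    finally have "m / (m + \<eta>) \<le> S x / (S x + \<eta>)"
      using m \<eta> S0[of x] by (simp add: frac_le_eq field_simps mult_right_mono)
    moreover have "m + \<eta> = m * (1 + \<theta>)" by (simp add: \<eta>_def algebra_simps)
    then have "m / (m + \<eta>) = 1 / (1 + \<theta>)" using m by simp
    moreover have "1 - \<theta> \<le> 1 / (1 + \<theta>)" using \<theta> by (simp add: field_simps)
    ultimately show ?thesis by simp
  qed
  moreover have "0 \<le> S x / (S x + \<eta>)" for x using S0[of x] \<eta> by simp
  ultimately show ?thesis using that by blast
qed

lemma C1c_test_diff:
  assumes "C1c_test U f f'" "C1c_test U g g'" "\<And>x. \<bar>f x - g x\<bar> \<le> 1"
  shows "C1c_test U (\<lambda>x. f x - g x) (\<lambda>x v. f' x v - g' x v)"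
proof -
  have "{x. f x - g x \<noteq> 0} \<subseteq> {x. f x \<noteq> 0} \<union> {x. g x \<noteq> 0}" by auto
  then have sub: "closure {x. f x - g x \<noteq> 0} \<subseteq> closure {x. f x \<noteq> 0} \<union> closure {x. g x \<noteq> 0}"
    by (metis closure_Un closure_mono)
  have "compact (closure {x. f x \<noteq> 0} \<union> closure {x. g x \<noteq> 0})"
    using C1c_test_compact_support[OF assms(1)] C1c_test_compact_support[OF assms(2)] by (rule compact_Un)
  then have "compact (closure {x. f x - g x \<noteq> 0})"
    using sub by (meson closed_closure compact_imp_bounded bounded_subset compact_eq_bounded_closed)
  then show ?thesis
    using assms sub C1c_test_support_subset[OF assms(1)] C1c_test_support_subset[OF assms(2)]
    unfolding C1c_test_def by (auto intro!: derivative_eq_intros continuous_intros)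
qed

lemma compact_open_approximation:
  fixes S E :: "'a::euclidean_space set"
  assumes S: "S \<in> sets borel" "S \<subseteq> E" and E: "open E" "bounded E" and e: "e > 0"
  obtains T V where "compact T" "T \<subseteq> S" "open V" "T \<subseteq> V" "V \<subseteq> E"
    "measure lborel (S - T) \<le> e" "measure lborel (V - T) \<le> e"
proof -
  have small: "measure lborel X \<le> e" if "X \<in> sets borel" "X \<in> lmeasurable" "emeasure lebesgue X < ennreal e" for X
    using that emeasure_eq_measure2[of X lebesgue] e by (simp add: ennreal_less_iff)
  obtain T where T: "closed T" "T \<subseteq> S" "S - T \<in> lmeasurable" "emeasure lebesgue (S - T) < ennreal e"
    using sets_lebesgue_inner_closed[of S e] S e by auto
  obtain G where G: "open G" "T \<subseteq> G" "G - T \<in> lmeasurable" "emeasure lebesgue (G - T) < ennreal e"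
    using sets_lebesgue_outer_open[of T e] T(1) e by auto
  have "G \<inter> E - T \<in> lmeasurable" "emeasure lebesgue (G \<inter> E - T) < ennreal e"
    using G T(1) E(1) emeasure_mono[of "G \<inter> E - T" "G - T" lebesgue]
    by (auto intro: fmeasurableI2[OF G(3)] order.strict_trans1)
  moreover have "compact T"
    using T(1,2) S(2) E(2) by (meson bounded_subset compact_eq_bounded_closed order_trans)
  ultimately show ?thesis
    using T G S E by (intro that[of T "G \<inter> E"] small) auto
qed

lemma integral_abs_indicator_diff_C1c_test_le:
  fixes S T V E :: "'a::euclidean_space set"
  assumes test: "C1c_test V c c'" and c: "\<And>x. 0 \<le> c x" "\<And>x. x \<in> T \<Longrightarrow> 1 - \<theta> \<le> c x"
    and \<theta>: "0 \<le> \<theta>" and E: "open E" "bounded E" and S: "S \<in> sets borel" "S \<subseteq> E"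
    and T: "compact T" "T \<subseteq> S" and V: "open V" "V \<subseteq> E"
  shows "integrable lborel (\<lambda>z. \<bar>indicator S z - c z\<bar>)"
    "(\<integral>z. \<bar>indicator S z - c z\<bar> \<partial>lborel)
       \<le> \<theta> * measure lborel E + measure lborel (S - T) + measure lborel (V - T)"
proof -
  have c_le: "c x \<le> 1" for x using C1c_test_abs_le[OF test, of x] by simp
  have c_supp: "c x \<noteq> 0 \<Longrightarrow> x \<in> V" for x
    using C1c_test_support_subset[OF test] closure_subset[of "{x. c x \<noteq> 0}"] by blast
  have pointwise: "\<bar>indicator S z - c z\<bar> \<le> \<theta> * indicator E z + indicator (S - T) z + indicator (V - T) z" for z
  proof -
    consider "z \<in> T" | "z \<in> S - T" | "z \<notin> S" by blast
    then show ?thesis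
    proof cases
      case 1
      then show ?thesis using c(2)[of z] c_le[of z] T(2) S(2) by (auto simp: indicator_def)
    next
      case 2
      then show ?thesis using c(1)[of z] c_le[of z] \<theta> S(2) by (auto simp: indicator_def)
    next
      case 3
      then show ?thesis
        using c(1)[of z] c_le[of z] c_supp[of z] \<theta> T(2) by (cases "c z = 0") (auto simp: indicator_def)
    qed
  qed
  have "E \<in> sets borel" "S - T \<in> sets borel" "V - T \<in> sets borel"
    using E(1) S(1) T(1) V(1) by (auto dest: compact_imp_closed)
  moreover have "bounded (S - T)" "bounded (V - T)"
    using S(2) V(2) E(2) by (auto intro: bounded_subset)
  ultimately have ind: "integrable lborel (indicator E :: 'a \<Rightarrow> real)"
    "integrable lborel (indicator (S - T) :: 'a \<Rightarrow> real)" "integrable lborel (indicator (V - T) :: 'a \<Rightarrow> real)"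
    using E(2) by (auto intro: integrable_indicator_bounded)
  then have dom: "integrable lborel (\<lambda>z. \<theta> * indicator E z + indicator (S - T) z + indicator (V - T) z)"
    by simp
  have "c \<in> borel_measurable borel" using borel_measurable_C1c_test(1)[OF test, of 0] by simp
  then show int: "integrable lborel (\<lambda>z. \<bar>indicator S z - c z\<bar>)"
    using S(1) pointwise \<theta> by (intro Bochner_Integration.integrable_bound[OF dom _ AE_I2]) auto
  have "(\<integral>z. \<bar>indicator S z - c z\<bar> \<partial>lborel)
      \<le> (\<integral>z. \<theta> * indicator E z + indicator (S - T) z + indicator (V - T) z \<partial>lborel)"
    using int dom pointwise by (rule integral_mono)
  also have "\<dots> = \<theta> * measure lborel E + measure lborel (S - T) + measure lborel (V - T)"
    using ind by simp
  finally show "(\<integral>z. \<bar>indicator S z - c z\<bar> \<partial>lborel)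
      \<le> \<theta> * measure lborel E + measure lborel (S - T) + measure lborel (V - T)" .
qed

lemma C1c_test_L1_approx_indicator:
  fixes S E :: "'a::euclidean_space set"
  assumes E: "open E" "bounded E" and S: "S \<in> sets borel" "S \<subseteq> E" and e: "e > 0"
  obtains c c' where "C1c_test E c c'" "\<And>x. 0 \<le> c x"
    "integrable lborel (\<lambda>z. \<bar>indicator S z - c z\<bar>)" "(\<integral>z. \<bar>indicator S z - c z\<bar> \<partial>lborel) \<le> e"
proof -
  define \<epsilon> where "\<epsilon> = e / 3"
  have \<epsilon>: "\<epsilon> > 0" using e by (simp add: \<epsilon>_def)
  obtain T V where T: "compact T" "T \<subseteq> S" "open V" "T \<subseteq> V" "V \<subseteq> E"
    "measure lborel (S - T) \<le> \<epsilon>" "measure lborel (V - T) \<le> \<epsilon>"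
    using compact_open_approximation[OF S E \<epsilon>] by blast
  define \<theta> where "\<theta> = \<epsilon> / (measure lborel E + 1)"
  have mE: "measure lborel E + 1 > 0" by (simp add: add_nonneg_pos)
  have \<theta>: "\<theta> > 0" "\<theta> * measure lborel E \<le> \<epsilon>"
    using \<epsilon> mE by (simp_all add: \<theta>_def pos_divide_le_eq)
  obtain c c' where c: "C1c_test V c c'" "\<And>x. 0 \<le> c x" "\<And>x. x \<in> T \<Longrightarrow> 1 - \<theta> \<le> c x"
    using C1c_test_urysohn[OF T(1,3,4) \<theta>(1)] by blast
  note L1 = integral_abs_indicator_diff_C1c_test_le[OF c less_imp_le[OF \<theta>(1)] E S T(1,2) T(3,5)]
  have "C1c_test E c c'"
    using C1c_test_support_subset[OF c(1)] T(5) by (intro C1c_test_subset[OF c(1)]) blast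
  moreover have "(\<integral>z. \<bar>indicator S z - c z\<bar> \<partial>lborel) \<le> e"
    using L1(2) \<theta>(2) T(6,7) by (simp add: \<epsilon>_def)
  ultimately show ?thesis using c(2) L1(1) that by blast
qed

lemma C1c_test_approx_signed_indicator:
  fixes P N E :: "'a::euclidean_space set"
  assumes E: "open E" "bounded E" and P: "P \<in> sets borel" "P \<subseteq> E" and N: "N \<in> sets borel" "N \<subseteq> E"
    and PN: "P \<inter> N = {}" and e: "e > 0"
  obtains \<psi> \<psi>' where "C1c_test E \<psi> \<psi>'"
    "measure lborel P + measure lborel N \<le> (\<integral>z. (indicator P z - indicator N z) * \<psi> z \<partial>lborel) + e"
proof -
  obtain c1 c1' where c1: "C1c_test E c1 c1'" "\<And>x. 0 \<le> c1 x"
    "integrable lborel (\<lambda>z. \<bar>indicator P z - c1 z\<bar>)" "(\<integral>z. \<bar>indicator P z - c1 z\<bar> \<partial>lborel) \<le> e / 2"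
    using C1c_test_L1_approx_indicator[OF E P, of "e / 2"] e by auto
  obtain c2 c2' where c2: "C1c_test E c2 c2'" "\<And>x. 0 \<le> c2 x"
    "integrable lborel (\<lambda>z. \<bar>indicator N z - c2 z\<bar>)" "(\<integral>z. \<bar>indicator N z - c2 z\<bar> \<partial>lborel) \<le> e / 2"
    using C1c_test_L1_approx_indicator[OF E N, of "e / 2"] e by auto
  have c_le: "c1 x \<le> 1" "c2 x \<le> 1" for x
    using C1c_test_abs_le[OF c1(1), of x] C1c_test_abs_le[OF c2(1), of x] by simp_all
  have "\<bar>c1 x - c2 x\<bar> \<le> 1" for x
    using c1(2)[of x] c2(2)[of x] c_le[of x] by (simp add: abs_le_iff)
  with c1(1) c2(1) have test: "C1c_test E (\<lambda>x. c1 x - c2 x) (\<lambda>x v. c1' x v - c2' x v)"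
    by (rule C1c_test_diff)
  \<comment> \<open>for \<open>a = indicator P - indicator N\<close>: \<open>a * (c1 - c2) = a\<^sup>2 + a * ((c1 - indicator P) - (c2 - indicator N))\<close>\<close>
  have pointwise: "indicator P z + indicator N z - \<bar>indicator P z - c1 z\<bar> - \<bar>indicator N z - c2 z\<bar>
      \<le> (indicator P z - indicator N z) * (c1 z - c2 z)" for z
    using PN c1(2)[of z] c2(2)[of z] by (cases "z \<in> P"; cases "z \<in> N") auto
  have int: "integrable lborel (indicator P :: 'a \<Rightarrow> real)" "integrable lborel (indicator N :: 'a \<Rightarrow> real)"
    using P N E(2) by (auto intro!: integrable_indicator_bounded intro: bounded_subset)
  have "integrable lborel (\<lambda>z. (indicator P z - indicator N z) * (c1 z - c2 z))"
    using integrable_C1c_test[OF test, of "\<lambda>z. indicator P z - indicator N z" 0] P(1) N(1) PN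
    by (simp add: indicator_def)
  then have "(\<integral>z. indicator P z + indicator N z - \<bar>indicator P z - c1 z\<bar> - \<bar>indicator N z - c2 z\<bar> \<partial>lborel)
      \<le> (\<integral>z. (indicator P z - indicator N z) * (c1 z - c2 z) \<partial>lborel)"
    using pointwise int c1(3) c2(3) by (intro integral_mono) auto
  then have "measure lborel P + measure lborel N - e
      \<le> (\<integral>z. (indicator P z - indicator N z) * (c1 z - c2 z) \<partial>lborel)"
    using int c1(3,4) c2(3,4) P(1) N(1) by simp
  then show ?thesis using test that by fastforce
qed

subsection \<open>The upper bound\<close>

lemma C1c_test_translate_seg_erosion:
  assumes test: "C1c_test (seg_erosion W v) \<psi> \<psi>'" and s: "0 \<le> s" "s \<le> 1"
  shows "C1c_test W (\<lambda>x. \<psi> (x + s *\<^sub>R v)) (\<lambda>x. \<psi>' (x + s *\<^sub>R v))"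
proof (rule C1c_test_translate[OF test], safe)
  fix x assume "x \<in> closure {x. \<psi> x \<noteq> 0}"
  then have "x \<in> seg_erosion W v" using C1c_test_support_subset[OF test] by blast
  then have "closed_segment (x - v) x \<subseteq> W" unfolding mem_seg_erosion .
  moreover have "x - s *\<^sub>R v \<in> closed_segment (x - v) x"
    unfolding in_segment using s by (intro conjI exI[of _ "1 - s"]) (auto simp: algebra_simps)
  ultimately show "x - s *\<^sub>R v \<in> W" by blast
qed

lemma integral_translate_diff_le_dir_variation:
  fixes A :: "'a::euclidean_space set"
  assumes test: "C1c_test (seg_erosion W (t *\<^sub>R u)) \<psi> \<psi>'" and A: "A \<in> sets borel"
    and V: "dir_variation u A W = ereal r" and t: "0 \<le> t"
  shows "(\<integral>z. indicator A z * (\<psi> z - \<psi> (z + t *\<^sub>R u)) \<partial>lborel) \<le> t * r"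
proof -
  define v where "v = t *\<^sub>R u"
  have mA: "(indicator A :: 'a \<Rightarrow> real) \<in> borel_measurable borel" "\<And>z. \<bar>indicator A z :: real\<bar> \<le> 1"
    using A by auto
  define F where "F s = (\<integral>z. indicator A z * \<psi> (z + s *\<^sub>R v) \<partial>lborel)" for s
  define F' where "F' s = (\<integral>z. indicator A z * \<psi>' (z + s *\<^sub>R v) v \<partial>lborel)" for s
  have "(F has_real_derivative F' s) (at s)" for s
    unfolding F_def[abs_def] F'_def by (rule has_real_derivative_integral_C1c_test[OF test mA])
  then obtain \<xi> where \<xi>: "0 < \<xi>" "\<xi> < 1" "F 1 - F 0 = F' \<xi>"
    using MVT2[of 0 1 F F'] by auto
  have "C1c_test W (\<lambda>x. - \<psi> (x + \<xi> *\<^sub>R v)) (\<lambda>x w. - \<psi>' (x + \<xi> *\<^sub>R v) w)"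
    using \<xi> by (intro C1c_test_uminus C1c_test_translate_seg_erosion[OF test[folded v_def]]) auto
  from C1c_test_le_dir_variation[OF this A, of u]
  have "- (\<integral>x. indicator A x * \<psi>' (x + \<xi> *\<^sub>R v) u \<partial>lborel) \<le> r"
    using V by simp
  moreover have "F' \<xi> = t * (\<integral>x. indicator A x * \<psi>' (x + \<xi> *\<^sub>R v) u \<partial>lborel)"
    unfolding F'_def v_def C1c_test_deriv_scaleR[OF test] by (simp add: mult.left_commute[of _ t])
  ultimately have "- F' \<xi> \<le> t * r"
    using mult_left_mono[OF _ t] by fastforce
  moreover have "(\<integral>z. indicator A z * (\<psi> z - \<psi> (z + t *\<^sub>R u)) \<partial>lborel) = F 0 - F 1"
    using Bochner_Integration.integral_diff[OF integrable_C1c_test[OF test mA, of 0] integrable_C1c_test[OF test mA, of v]]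
    unfolding F_def v_def by (simp add: right_diff_distrib)
  ultimately show ?thesis using \<xi>(3) by simp
qed

lemma dir_variation_nonneg:
  fixes A :: "'a::euclidean_space set"
  assumes "A \<in> sets borel"
  shows "0 \<le> dir_variation u A U"
proof -
  have "C1c_test U (\<lambda>_. 0) (\<lambda>_ _. 0)" unfolding C1c_test_def by auto
  from C1c_test_le_dir_variation[OF this assms, of u] show ?thesis by (simp add: zero_ereal_def)
qed

lemma sigma_fun_le_dir_variation_pos:
  fixes A :: "'a::euclidean_space set"
  assumes A: "A \<in> sets borel" and W: "admissible_window W" and u: "norm u = 1" and t: "t > 0"
    and V: "dir_variation u A W = ereal r"
  shows "sigma_fun (t *\<^sub>R u) W A \<le> r"
proof -
  define v where "v = t *\<^sub>R u"
  define E where "E = seg_erosion W v"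
  define B where "B = (+) v ` A"
  have v: "v \<noteq> 0" "norm v = t" using t u by (auto simp: v_def)
  have E: "open E" "bounded E" "E \<in> sets borel" using seg_erosion_window[OF W] by (auto simp: E_def)
  have B: "B = (\<lambda>z. z - v) -` A" by (force simp: B_def image_iff algebra_simps)
  have "B \<in> sets borel" unfolding B by (rule measurable_sets_borel[OF _ A]) auto
  then have sets: "E \<inter> A - B \<in> sets borel" "E \<inter> B - A \<in> sets borel" using A E by auto
  have "t * sigma_fun v W A \<le> t * r + e" if e: "e > 0" for e
  proof -
    obtain \<psi> \<psi>' where test: "C1c_test E \<psi> \<psi>'" and approx:
      "measure lborel (E \<inter> A - B) + measure lborel (E \<inter> B - A)
        \<le> (\<integral>z. (indicator (E \<inter> A - B) z - indicator (E \<inter> B - A) z) * \<psi> z \<partial>lborel) + e"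
      using C1c_test_approx_signed_indicator[OF E(1,2) sets(1) _ sets(2) _ _ e] by blast
    have "(\<integral>z. (indicator (E \<inter> A - B) z - indicator (E \<inter> B - A) z) * \<psi> z \<partial>lborel)
        = (\<integral>z. indicator A z * (\<psi> z - \<psi> (z + v)) \<partial>lborel)"
      unfolding B_def by (rule integral_signed_indicator_C1c_test[OF test A])
    also have "\<dots> \<le> t * r"
      using integral_translate_diff_le_dir_variation[OF test[unfolded E_def v_def] A V] t by (simp add: v_def)
    finally show ?thesis
      using approx sigma_fun_eq_measure[OF _ W v(1), of A] A sets v(2) by (simp add: E_def B_def)
  qed
  then have "t * sigma_fun v W A \<le> t * r" by (rule field_le_epsilon)
  then show ?thesis using t by (simp add: v_def)
qed

lemma sigma_fun_le_dir_variation: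
  fixes A :: "'a::euclidean_space set"
  assumes A: "A \<in> sets borel" and W: "admissible_window W" and u: "norm u = 1" and t: "t \<noteq> 0"
  shows "ereal (sigma_fun (t *\<^sub>R u) W A) \<le> dir_variation u A W"
proof (cases "dir_variation u A W")
  case (real r)
  then show ?thesis
    using sigma_fun_le_dir_variation_pos[OF A W u _ real, of "\<bar>t\<bar>"] t
    by (simp add: sigma_fun_scaleR_abs[of t])
next
  case MInf
  then show ?thesis using dir_variation_nonneg[OF A, of u W] by simp
qed simp

lemma sigma_fun_tendsto_dir_variation:
  fixes A :: "'a::euclidean_space set"
  assumes A: "A \<in> sets borel" and W: "admissible_window W" and u: "norm u = 1"
  shows "((\<lambda>t. ereal (sigma_fun (t *\<^sub>R u) W A)) \<longlongrightarrow> dir_variation u A W) (at 0)"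
proof -
  let ?f = "\<lambda>t. ereal (sigma_fun (t *\<^sub>R u) W A)"
  have "Limsup (at_right 0) ?f \<le> dir_variation u A W"
    using sigma_fun_le_dir_variation[OF A W u]
    by (intro Limsup_bounded) (auto simp: eventually_at_filter)
  moreover have "Liminf (at_right 0) ?f \<le> Limsup (at_right 0) ?f"
    by (rule Liminf_le_Limsup) simp
  ultimately have right: "(?f \<longlongrightarrow> dir_variation u A W) (at_right 0)"
    using dir_variation_le_Liminf_sigma_fun[OF A W u] by (intro Liminf_eq_Limsup) auto
  moreover have "(?f \<longlongrightarrow> dir_variation u A W) (at_left 0)"
    unfolding filterlim_at_left_to_right
    using right by (simp add: sigma_fun_uminus[of "_ *\<^sub>R u", simplified])
  ultimately show ?thesis by (intro filterlim_split_at)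
qed

subsection \<open>Random sets\<close>

lemma sets_random_measurable_set:
  assumes "random_measurable_set M X" "\<omega> \<in> space M"
  shows "X \<omega> \<in> sets borel"
proof -
  have "Pair \<omega> -` {p \<in> space M \<times> UNIV. snd p \<in> X (fst p)} \<in> sets lborel"
    using assms(1) unfolding random_measurable_set_def by (intro sets_Pair1) auto
  moreover have "Pair \<omega> -` {p \<in> space M \<times> UNIV. snd p \<in> X (fst p)} = X \<omega>"
    using assms(2) by auto
  ultimately show ?thesis by simp
qed

lemma measurable_covario:
  fixes X :: "'b \<Rightarrow> 'a::euclidean_space set"
  assumes X: "random_measurable_set M X" and F: "F \<in> sets borel"
  shows "(\<lambda>\<omega>. covario y F (X \<omega>)) \<in> borel_measurable M"
proof -
  define G where "G = {p \<in> space M \<times> UNIV. snd p \<in> X (fst p)}"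
  have G: "G \<in> sets (M \<Otimes>\<^sub>M lborel)" using X unfolding random_measurable_set_def G_def by auto
  define Q where "Q = G \<inter> ((\<lambda>p. (fst p, snd p - y)) -` G \<inter> space (M \<Otimes>\<^sub>M lborel)) \<inter> (space M \<times> F)"
  have "(\<lambda>p. (fst p, snd p - y)) \<in> measurable (M \<Otimes>\<^sub>M lborel) (M \<Otimes>\<^sub>M lborel)"
    by measurable
  from measurable_sets[OF this G] have Q: "Q \<in> sets (M \<Otimes>\<^sub>M lborel)"
    unfolding Q_def using G F by (auto intro!: sets.Int pair_measureI)
  have "enn2real (emeasure lborel (Pair \<omega> -` Q)) = covario y F (X \<omega>)" if \<omega>: "\<omega> \<in> space M" for \<omega>
  proof -
    have "Pair \<omega> -` Q = X \<omega> \<inter> (\<lambda>a. y + a) ` X \<omega> \<inter> F"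
      using \<omega> unfolding Q_def G_def by (force simp: space_pair_measure image_iff algebra_simps)
    moreover have "Pair \<omega> -` Q \<in> sets lborel" using Q by (rule sets_Pair1)
    ultimately show ?thesis unfolding covario_def by (simp add: measure_def)
  qed
  moreover have "(\<lambda>\<omega>. enn2real (emeasure lborel (Pair \<omega> -` Q))) \<in> borel_measurable M"
    using lborel.measurable_emeasure_Pair[OF Q] by measurable
  ultimately show ?thesis by (rule measurable_cong[THEN iffD1])
qed

lemma measurable_sigma_fun:
  fixes X :: "'b \<Rightarrow> 'a::euclidean_space set"
  assumes X: "random_measurable_set M X" and W: "admissible_window W"
  shows "(\<lambda>\<omega>. sigma_fun v W (X \<omega>)) \<in> borel_measurable M"
proof -
  have "seg_erosion W v \<in> sets borel" "(+) (- v) ` seg_erosion W v \<in> sets borel"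
    using seg_erosion_window(1)[OF W] open_translation[of "seg_erosion W v" "- v"] by auto
  then show ?thesis
    unfolding sigma_fun_def erosion_segment_eq_translation seg_erosion_def[symmetric]
    by (intro borel_measurable_times borel_measurable_add borel_measurable_diff borel_measurable_const
        measurable_covario[OF X])
qed

lemma sigma_X_eq_nn_integral:
  fixes X :: "'b \<Rightarrow> 'a::euclidean_space set"
  assumes X: "random_measurable_set M X" and W: "admissible_window W" and v: "v \<noteq> 0"
  shows "ereal (sigma_X M X v W) = enn2ereal (\<integral>\<^sup>+\<omega>. ennreal (sigma_fun v W (X \<omega>)) \<partial>M)"
proof -
  interpret prob_space M using X unfolding random_measurable_set_def by auto
  let ?f = "\<lambda>\<omega>. sigma_fun v W (X \<omega>)"
  have bounds: "0 \<le> ?f \<omega>" "?f \<omega> \<le> measure lebesgue W / norm v" if "\<omega> \<in> space M" for \<omega>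
    using sigma_fun_bounds[OF _ W v] sets_random_measurable_set[OF X that] by auto
  have "integrable M ?f"
    using bounds measurable_sigma_fun[OF X W]
    by (intro integrable_const_bound[where B="measure lebesgue W / norm v"]) (auto intro!: AE_I2)
  then have "(\<integral>\<^sup>+\<omega>. ennreal (?f \<omega>) \<partial>M) = ennreal (sigma_X M X v W)"
    unfolding sigma_X_def using bounds by (intro nn_integral_eq_integral) auto
  moreover have "0 \<le> sigma_X M X v W"
    unfolding sigma_X_def using bounds by (intro integral_nonneg_AE) auto
  ultimately show ?thesis by simp
qed

lemma nn_integral_tendsto_of_le_limit:
  fixes f :: "nat \<Rightarrow> 'a \<Rightarrow> ennreal"
  assumes f: "\<And>n. f n \<in> borel_measurable M"
    and lim: "\<And>x. x \<in> space M \<Longrightarrow> (\<lambda>n. f n x) \<longlonglongrightarrow> g x"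
    and le: "\<And>n x. x \<in> space M \<Longrightarrow> f n x \<le> g x"
  shows "(\<lambda>n. \<integral>\<^sup>+x. f n x \<partial>M) \<longlonglongrightarrow> (\<integral>\<^sup>+x. g x \<partial>M)"
proof -
  have "(\<integral>\<^sup>+x. g x \<partial>M) = (\<integral>\<^sup>+x. liminf (\<lambda>n. f n x) \<partial>M)"
    by (intro nn_integral_cong) (simp add: lim_imp_Liminf[OF _ lim])
  also have "\<dots> \<le> liminf (\<lambda>n. \<integral>\<^sup>+x. f n x \<partial>M)"
    by (rule nn_integral_liminf[OF f])
  finally have "(\<integral>\<^sup>+x. g x \<partial>M) \<le> liminf (\<lambda>n. \<integral>\<^sup>+x. f n x \<partial>M)" .
  moreover have "limsup (\<lambda>n. \<integral>\<^sup>+x. f n x \<partial>M) \<le> (\<integral>\<^sup>+x. g x \<partial>M)"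
    using le by (intro Limsup_bounded always_eventually allI nn_integral_mono) auto
  moreover have "liminf (\<lambda>n. \<integral>\<^sup>+x. f n x \<partial>M) \<le> limsup (\<lambda>n. \<integral>\<^sup>+x. f n x \<partial>M)"
    by (rule Liminf_le_Limsup) simp
  ultimately show ?thesis by (intro Liminf_eq_Limsup) auto
qed

theorem corollary3p4:
  fixes M :: "'b measure" and X :: "'b \<Rightarrow> 'a::euclidean_space set"
    and W :: "'a set" and u :: 'a
  assumes "random_measurable_set M X"
    and "admissible_window W"
    and "norm u = 1"
  shows "(\<forall>\<epsilon>::real. \<epsilon> \<noteq> 0 \<longrightarrow> ereal (sigma_X M X (\<epsilon> *\<^sub>R u) W) \<le> exp_dir_variation M X u W)
     \<and> ((\<lambda>\<epsilon>::real. ereal (sigma_X M X (\<epsilon> *\<^sub>R u) W)) \<longlongrightarrow> exp_dir_variation M X u W) (at 0)"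
proof -
  note X = assms(1) and W = assms(2) and u = assms(3)
  let ?\<sigma> = "\<lambda>\<epsilon> \<omega>. ennreal (sigma_fun (\<epsilon> *\<^sub>R u) W (X \<omega>))"
  let ?V = "\<lambda>\<omega>. e2ennreal (dir_variation u (X \<omega>) W)"
  have \<sigma>X: "ereal (sigma_X M X (\<epsilon> *\<^sub>R u) W) = enn2ereal (\<integral>\<^sup>+\<omega>. ?\<sigma> \<epsilon> \<omega> \<partial>M)" if "\<epsilon> \<noteq> 0" for \<epsilon>
    by (rule sigma_X_eq_nn_integral[OF X W]) (use that u in auto)
  have le: "?\<sigma> \<epsilon> \<omega> \<le> ?V \<omega>" if "\<epsilon> \<noteq> 0" "\<omega> \<in> space M" for \<epsilon> \<omega>
    using e2ennreal_mono[OF sigma_fun_le_dir_variation[OF sets_random_measurable_set[OF X] W u]] that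
    by simp
  have "(\<integral>\<^sup>+\<omega>. ?\<sigma> \<epsilon> \<omega> \<partial>M) \<le> (\<integral>\<^sup>+\<omega>. ?V \<omega> \<partial>M)" if "\<epsilon> \<noteq> 0" for \<epsilon>
    using le[OF that] by (intro nn_integral_mono)
  moreover have "(\<lambda>n. \<integral>\<^sup>+\<omega>. ?\<sigma> (h n) \<omega> \<partial>M) \<longlonglongrightarrow> (\<integral>\<^sup>+\<omega>. ?V \<omega> \<partial>M)"
    if "\<And>n. h n \<noteq> 0" "h \<longlonglongrightarrow> 0" for h
  proof (rule nn_integral_tendsto_of_le_limit)
    fix \<omega> assume "\<omega> \<in> space M"
    from sigma_fun_tendsto_dir_variation[OF sets_random_measurable_set[OF X this] W u]
    have "(\<lambda>n. ereal (sigma_fun (h n *\<^sub>R u) W (X \<omega>))) \<longlonglongrightarrow> dir_variation u (X \<omega>) W"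
      using that unfolding tendsto_at_iff_sequentially o_def by simp
    then show "(\<lambda>n. ?\<sigma> (h n) \<omega>) \<longlonglongrightarrow> ?V \<omega>" by (auto dest: tendsto_e2ennrealI)
  qed (use le that measurable_sigma_fun[OF X W] in auto)
  ultimately show ?thesis
    unfolding exp_dir_variation_def tendsto_at_iff_sequentially o_def
    using \<sigma>X by (auto simp: less_eq_ennreal.rep_eq intro!: tendsto_enn2erealI)
qed

end
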